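(* Let $M,N$ be weights of $\mathbb{R}^m,\mathbb{R}^n$, let $A\in\mathbb{R}^{m\times n}$ with $MA=AN$, and let $K\subseteq\mathbb{R}^n$ be a closed cone. If $$(A^{[\dagger]})^{[*]}\circ I\circ K^{[*]}\subseteq A\circ I\circ K,$$ then $$(A^{[*]}\circ A)^{[\dagger]}\circ K^{[*]}\subseteq K+\mathcal{N}(A\circ I).$$
   Context: A weight is a real symmetric matrix $W$ with $W^2=I$. $\mathbb{R}^m$ and $\mathbb{R}^n$ carry weights $M\in\mathbb{R}^{m\times m}$ and $N\in\mathbb{R}^{n\times n}$, respectively. The indefinite inner product on the space with weight $W$ is $[x,y]=\langle x,Wy\rangle$. Indefinite matrix product: if $B$ has $p$ columns and $C$ has $p$ rows (or is a vector in $\mathbb{R}^p$), $p\in\{m,n\}$, and $W$ is the weight of $\mathbb{R}^p$, then $B\circ C:=BWC$. $I$ denotes an identity matrix of the appropriate size. Indefinite adjoint of $B\in\mathbb{R}^{p\times q}$: $B^{[*]}:=W_qB^TW_p$, where $W_p,W_q$ are the weights of $\mathbb{R}^p,\mathbb{R}^q$. Indefinite Moore–Penrose inverse: for $B\in\mathbb{R}^{p\times q}$, $B^{[\dagger]}$ is the unique $X\in\mathbb{R}^{q\times p}$ such that - $B\circ X\circ B=B$, - $X\circ B\circ X=X$, - $(B\circ X)^{[*]}=B\circ X$, - $(X\circ B)^{[*]}=X\circ B$. It equals $W_qB^\dagger W_p$. Range and null space: for a matrix $B$ with $q$ columns, $\mathcal{R}(B)=\{B\circ x:x\in\mathbb{R}^q\}$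 and $\mathcal{N}(B)=\{x\in\mathbb{R}^q:B\circ x=0\}$. A cone is a nonempty set closed under addition and under multiplication by nonnegative scalars. For $S$ a subset of $\mathbb{R}^p$ with weight $W$, the dual is $S^{[*]}=\{x\in\mathbb{R}^p:[x,t]\ge0\ \forall t\in S\}$. For a matrix $B$ and a set $S$, $B\circ S=\{B\circ s:s\in S\}$. The sum of sets is the Minkowski sum. *)

theory Defs
  imports "HOL-Analysis.Analysis"
begin

text \<open>Dimensions are type indices: R^m = real^'m, R^n = real^'n.
  Weights are passed explicitly to every indefinite operation.\<close>

definition weight :: "real^'k^'k \<Rightarrow> bool" where
  "weight W \<longleftrightarrow> transpose W = W \<and> W ** W = mat 1"

text \<open>Indefinite matrix product B o C = B W C, W the weight of the space
  indexed by the columns of B.\<close>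
definition imult :: "real^'p^'p \<Rightarrow> real^'p^'r \<Rightarrow> real^'s^'p \<Rightarrow> real^'s^'r" where
  "imult W B C = B ** W ** C"

definition iapply :: "real^'p^'p \<Rightarrow> real^'p^'r \<Rightarrow> real^'p \<Rightarrow> real^'r" where
  "iapply W B x = B *v (W *v x)"

definition iimage :: "real^'p^'p \<Rightarrow> real^'p^'r \<Rightarrow> (real^'p) set \<Rightarrow> (real^'r) set" where
  "iimage W B S = (\<lambda>s. iapply W B s) ` S"

definition iadj :: "real^'p^'p \<Rightarrow> real^'q^'q \<Rightarrow> real^'q^'p \<Rightarrow> real^'p^'q" where
  "iadj Wp Wq B = Wq ** transpose B ** Wp"

definition impinv :: "real^'p^'p \<Rightarrow> real^'q^'q \<Rightarrow> real^'q^'p \<Rightarrow> real^'p^'q" where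
  "impinv Wp Wq B = (THE X.
      imult Wp (imult Wq B X) B = B \<and>
      imult Wq (imult Wp X B) X = X \<and>
      iadj Wp Wp (imult Wq B X) = imult Wq B X \<and>
      iadj Wq Wq (imult Wp X B) = imult Wp X B)"

definition inull :: "real^'p^'p \<Rightarrow> real^'p^'r \<Rightarrow> (real^'p) set" where
  "inull W B = {x. iapply W B x = 0}"

definition is_cone :: "'a::real_vector set \<Rightarrow> bool" where
  "is_cone K \<longleftrightarrow> K \<noteq> {} \<and> (\<forall>x\<in>K. \<forall>y\<in>K. x + y \<in> K) \<and>
     (\<forall>x\<in>K. \<forall>c::real. c \<ge> 0 \<longrightarrow> c *\<^sub>R x \<in> K)"

definition idual :: "real^'p^'p \<Rightarrow> (real^'p) set \<Rightarrow> (real^'p) set" where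
  "idual W S = {x. \<forall>t\<in>S. x \<bullet> (W *v t) \<ge> 0}"

definition msum :: "'a::plus set \<Rightarrow> 'a set \<Rightarrow> 'a set" where
  "msum S T = {s + t | s t. s \<in> S \<and> t \<in> T}"

end

theory Submission
  imports Defs
begin

text \<open>A weight is a symmetric involution, hence orthogonal, so the indefinite inverse
  \<open>A\<^sup>[\<^sup>\<dagger>\<^sup>]\<close> is the ordinary Moore-Penrose inverse \<open>pinv A\<close> conjugated by the weights; the
  intertwining \<open>M A = A N\<close> makes the two equal. Similarly \<open>(A\<^sup>[\<^sup>*\<^sup>] \<circ> A)\<^sup>[\<^sup>\<dagger>\<^sup>] \<circ> y\<close> is
  \<open>pinv A (pinv A)\<^sup>T y\<close>, and the hypothesis provides \<open>k \<in> K\<close> with \<open>(pinv A)\<^sup>T y = A k\<close>.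
  The image point \<open>pinv A A k\<close> then differs from \<open>k\<close> by an element of the null space of
  \<open>A\<close>, because \<open>A (pinv A) A = A\<close>.\<close>

definition moore_penrose :: "real^'n^'m \<Rightarrow> real^'m^'n \<Rightarrow> bool" where
  "moore_penrose A X \<longleftrightarrow> A ** X ** A = A \<and> X ** A ** X = X \<and>
     transpose (A ** X) = A ** X \<and> transpose (X ** A) = X ** A"

lemma inner_vector_matrix_mult: "(x::real^'n) \<bullet> (y v* A) = (A *v x) \<bullet> y"
  by (metis dot_lmul_matrix inner_commute)

lemma transpose_eq_selfI:
  fixes C :: "real^'n^'n"
  assumes "\<And>u v. u \<bullet> (C *v v) = (C *v u) \<bullet> v"
  shows "transpose C = C"
proof -
  have "(transpose C *v u - C *v u) \<bullet> v = 0" for u v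
    using assms[of u v] by (simp add: inner_diff_left dot_lmul_matrix)
  then have "transpose C *v u = C *v u" for u
    by (metis inner_eq_zero_iff right_minus_eq)
  then show ?thesis by (simp add: matrix_eq)
qed

text \<open>A linear left inverse \<open>h\<close> of \<open>A\<close> on the row space gives \<open>G\<close>, for which \<open>G A\<close> is the
  orthogonal projection onto the row space.\<close>
lemma exists_minimum_norm_inverse:
  fixes A :: "real^'n^'m"
  shows "\<exists>G. A ** G ** A = A \<and> transpose (G ** A) = G ** A"
proof -
  define R where "R = range (\<lambda>u. transpose A *v u)"
  have "subspace R"
    unfolding R_def by (rule linear_subspace_image[OF matrix_vector_mul_linear subspace_UNIV])
  then have span_R: "span R = R"
    by (simp add: span_eq_iff)
  have orth_null: "w \<bullet> z = 0" if "w \<in> R" "A *v z = 0" for w z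
    using that by (auto simp: R_def inner_vector_matrix_mult inner_commute)
  have "\<exists>w z. x = w + z \<and> w \<in> R \<and> A *v z = 0" for x
  proof -
    obtain w z where "w \<in> span R" "x = w + z" and z: "\<And>v. v \<in> span R \<Longrightarrow> orthogonal z v"
      using orthogonal_subspace_decomp_exists by blast
    moreover have "transpose A *v (A *v z) \<in> span R"
      by (simp add: R_def span_base)
    ultimately have "A *v z = 0"
      using inner_vector_matrix_mult[of z "A *v z" A] by (simp add: orthogonal_def)
    with \<open>w \<in> span R\<close> \<open>x = w + z\<close> span_R show ?thesis
      by auto
  qed
  then obtain p q
    where decomp: "\<And>x. x = p x + q x" and p: "\<And>x. p x \<in> R" and q: "\<And>x. A *v q x = 0"
    by metis
  have "inj_on (\<lambda>x. A *v x) R"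
  proof (rule inj_onI)
    fix v w assume "v \<in> R" "w \<in> R" "A *v v = A *v w"
    then have "v - w \<in> R" "A *v (v - w) = 0"
      by (simp_all add: \<open>subspace R\<close> subspace_diff matrix_vector_mult_diff_distrib)
    then show "v = w"
      using orth_null by fastforce
  qed
  then obtain h where h: "linear h" "\<And>w. w \<in> R \<Longrightarrow> h (A *v w) = w"
    using linear_inj_on_left_inverse[of "(*v) A" R] span_R by auto
  have Ap: "A *v p x = A *v x" for x
    using decomp[of x] q[of x] by (metis add.right_neutral matrix_vector_right_distrib)
  have hA: "h (A *v x) = p x" for x
    using h(2) p Ap by metis
  define G where "G = matrix h"
  have G: "G *v y = h y" for y
    using h(1) by (simp add: G_def matrix_works linear_matrix_vector_mul_eq)
  have "A ** G ** A = A"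
    by (simp add: matrix_eq G hA Ap flip: matrix_vector_mul_assoc)
  moreover have "transpose (G ** A) = G ** A"
  proof (rule transpose_eq_selfI)
    fix u v
    have "u \<bullet> p v = p u \<bullet> p v" "p u \<bullet> v = p u \<bullet> p v"
      using decomp[of u] decomp[of v] orth_null[OF p q]
      by (metis add.right_neutral inner_add_left inner_commute, metis add.right_neutral inner_add_right)
    then show "u \<bullet> ((G ** A) *v v) = ((G ** A) *v u) \<bullet> v"
      by (simp add: G hA flip: matrix_vector_mul_assoc)
  qed
  ultimately show ?thesis by blast
qed

text \<open>Urquhart's formula: if \<open>G\<close> is as above for \<open>A\<close> and \<open>F\<^sup>T\<close> for \<open>A\<^sup>T\<close>, then \<open>G A F\<close> is
  the Moore-Penrose inverse.\<close>
lemma moore_penrose_exists: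
  fixes A :: "real^'n^'m"
  shows "\<exists>X. moore_penrose A X"
proof -
  obtain G where G: "A ** G ** A = A" "transpose (G ** A) = G ** A"
    using exists_minimum_norm_inverse by blast
  obtain F' where F': "transpose A ** F' ** transpose A = transpose A"
      "transpose (F' ** transpose A) = F' ** transpose A"
    using exists_minimum_norm_inverse by blast
  define F where "F = transpose F'"
  have F: "A ** F ** A = A" "transpose (A ** F) = A ** F"
    using arg_cong[OF F'(1), of transpose] F'(2)
    by (simp_all add: F_def matrix_transpose_mul matrix_mul_assoc)
  have AX: "A ** (G ** A ** F) = A ** F"
    by (metis G(1) matrix_mul_assoc)
  have XA: "G ** A ** F ** A = G ** A"
    by (metis F(1) matrix_mul_assoc)
  have "moore_penrose A (G ** A ** F)"
    unfolding moore_penrose_def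
    by (metis AX XA F G matrix_mul_assoc)
  then show ?thesis ..
qed

lemma moore_penrose_unique:
  assumes X: "moore_penrose A X" and Y: "moore_penrose A Y"
  shows "X = Y"
proof -
  have "transpose A = transpose (A ** Y ** A)"
    using Y by (simp add: moore_penrose_def)
  also have "\<dots> = transpose A ** transpose (A ** Y)"
    by (rule matrix_transpose_mul)
  also have "\<dots> = transpose A ** A ** Y"
    using Y by (simp add: moore_penrose_def matrix_mul_assoc)
  finally have At_Y: "transpose A ** A ** Y = transpose A" ..
  have "transpose A = transpose (A ** (X ** A))"
    using X by (simp add: moore_penrose_def matrix_mul_assoc)
  also have "\<dots> = transpose (X ** A) ** transpose A"
    by (rule matrix_transpose_mul)
  also have "\<dots> = X ** A ** transpose A"
    using X by (simp add: moore_penrose_def)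
  finally have X_At: "X ** A ** transpose A = transpose A" ..
  have "X = X ** transpose (A ** X)"
    using X by (simp add: moore_penrose_def matrix_mul_assoc)
  also have "\<dots> = X ** transpose X ** (transpose A ** A ** Y)"
    by (simp add: At_Y matrix_transpose_mul matrix_mul_assoc)
  also have "\<dots> = X ** transpose (A ** X) ** A ** Y"
    by (simp add: matrix_transpose_mul matrix_mul_assoc)
  also have "\<dots> = X ** A ** Y"
    using X by (simp add: moore_penrose_def matrix_mul_assoc)
  finally have X_eq: "X = X ** A ** Y" .
  have "Y = transpose (Y ** A) ** Y"
    using Y by (simp add: moore_penrose_def)
  also have "\<dots> = (X ** A ** transpose A) ** transpose Y ** Y"
    by (simp add: X_At matrix_transpose_mul)
  also have "\<dots> = X ** A ** (transpose (Y ** A) ** Y)"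
    by (simp add: matrix_transpose_mul matrix_mul_assoc)
  also have "\<dots> = X ** A ** Y"
    using Y by (simp add: moore_penrose_def)
  finally show ?thesis
    using X_eq by simp
qed

definition pinv :: "real^'n^'m \<Rightarrow> real^'m^'n" where
  "pinv A = (THE X. moore_penrose A X)"

lemma moore_penrose_pinv: "moore_penrose A (pinv A)"
  unfolding pinv_def by (metis moore_penrose_exists moore_penrose_unique theI)

lemma pinv_eqI: "moore_penrose A X \<Longrightarrow> pinv A = X"
  using moore_penrose_pinv moore_penrose_unique by blast

lemma moore_penrose_assoc_rules:
  assumes "moore_penrose A X"
  shows "A ** X ** A = A" "C ** A ** X ** A = C ** A"
    and "X ** A ** X = X" "D ** X ** A ** X = D ** X"
    and "transpose X ** transpose A = A ** X" "C ** transpose X ** transpose A = C ** A ** X"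
    and "transpose A ** transpose X = X ** A" "D ** transpose A ** transpose X = D ** X ** A"
proof -
  show AXA: "A ** X ** A = A" and XAX: "X ** A ** X = X"
    and AX: "transpose X ** transpose A = A ** X" and XA: "transpose A ** transpose X = X ** A"
    using assms by (simp_all add: moore_penrose_def flip: matrix_transpose_mul)
  show "C ** A ** X ** A = C ** A" "D ** X ** A ** X = D ** X"
    "C ** transpose X ** transpose A = C ** A ** X" "D ** transpose A ** transpose X = D ** X ** A"
    by (metis AXA matrix_mul_assoc, metis XAX matrix_mul_assoc,
        metis AX matrix_mul_assoc, metis XA matrix_mul_assoc)
qed

lemma pinv_orthogonal_mult:
  assumes U: "orthogonal_matrix U" and V: "orthogonal_matrix V"
  shows "pinv (U ** A ** V) = transpose V ** pinv A ** transpose U"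
proof (rule pinv_eqI)
  have cancel: "C ** transpose U ** U = C" "transpose U ** U = mat 1"
    "D ** V ** transpose V = D" "V ** transpose V = mat 1" for C D
    using U V by (simp_all add: orthogonal_matrix_def flip: matrix_mul_assoc)
  show "moore_penrose (U ** A ** V) (transpose V ** pinv A ** transpose U)"
    by (simp add: moore_penrose_def matrix_transpose_mul matrix_mul_assoc cancel
        moore_penrose_assoc_rules[OF moore_penrose_pinv])
qed

lemma pinv_orthogonal_mult_left:
  "orthogonal_matrix U \<Longrightarrow> pinv (U ** A) = pinv A ** transpose U"
  using pinv_orthogonal_mult[OF _ orthogonal_matrix_id, of U A] by simp

lemma pinv_gram: "pinv (transpose A ** A) = pinv A ** transpose (pinv A)"
proof (rule pinv_eqI)
  note rules = moore_penrose_assoc_rules[OF moore_penrose_pinv[of A]]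
  have "transpose A ** transpose (pinv A) ** transpose A = transpose A"
    by (metis rules(1) matrix_transpose_mul matrix_mul_assoc)
  then have "transpose A ** A ** pinv A = transpose A" "pinv A ** A ** transpose A = transpose A"
    by (metis rules(5) matrix_mul_assoc, metis rules(7))
  then have absorb: "transpose A ** A ** pinv A = transpose A"
      "C ** transpose A ** A ** pinv A = C ** transpose A"
      "pinv A ** A ** transpose A = transpose A"
      "D ** pinv A ** A ** transpose A = D ** transpose A" for C D
    by (metis matrix_mul_assoc)+
  show "moore_penrose (transpose A ** A) (pinv A ** transpose (pinv A))"
    unfolding moore_penrose_def
    by (simp add: matrix_transpose_mul matrix_mul_assoc rules absorb)
qed

lemma weight_simps:
  assumes "weight W"
  shows "transpose W = W" "W ** W = mat 1" "C ** W ** W = C"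
  using assms by (auto simp: weight_def simp flip: matrix_mul_assoc)

lemma weight_orthogonal_matrix: "weight W \<Longrightarrow> orthogonal_matrix W"
  by (simp add: orthogonal_matrix weight_simps)

lemma weight_sandwich_cancel:
  assumes "weight U" "weight V"
  shows "U ** C ** V = U ** D ** V \<longleftrightarrow> C = D"
proof -
  have "U ** (U ** E ** V) ** V = E" for E
    using assms by (simp add: matrix_mul_assoc weight_simps)
  then show ?thesis
    by metis
qed

lemma iadj_self_eq_iff_symmetric:
  assumes W: "weight W"
  shows "iadj W W S = S \<longleftrightarrow> transpose (S ** W) = S ** W"
    and "iadj W W S = S \<longleftrightarrow> transpose (W ** S) = W ** S"
proof -
  have "transpose (S ** W) = iadj W W S ** W" "transpose (W ** S) = W ** iadj W W S"
    by (simp_all add: iadj_def matrix_transpose_mul weight_simps[OF W] matrix_mul_assoc)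
  moreover have "iadj W W S = transpose (S ** W) ** W" "iadj W W S = W ** transpose (W ** S)"
    by (simp_all add: iadj_def matrix_transpose_mul weight_simps[OF W] matrix_mul_assoc)
  ultimately show "iadj W W S = S \<longleftrightarrow> transpose (S ** W) = S ** W"
    and "iadj W W S = S \<longleftrightarrow> transpose (W ** S) = W ** S"
    by (metis weight_simps(3)[OF W], metis weight_simps(2)[OF W] matrix_mul_assoc matrix_mul_lid)
qed

lemma impinv_eq_pinv:
  assumes p: "weight Wp" and q: "weight Wq"
  shows "impinv Wp Wq B = Wq ** pinv B ** Wp"
proof -
  note W = weight_simps[OF p] weight_simps[OF q]
  have penrose_iff: "imult Wp (imult Wq B X) B = B \<and> imult Wq (imult Wp X B) X = X \<and>
      iadj Wp Wp (imult Wq B X) = imult Wq B X \<and> iadj Wq Wq (imult Wp X B) = imult Wp X B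
    \<longleftrightarrow> moore_penrose B (Wq ** X ** Wp)" for X
  proof -
    have "X ** Wp ** B ** Wq ** X = X \<longleftrightarrow>
        Wq ** X ** Wp ** B ** (Wq ** X ** Wp) = Wq ** X ** Wp"
      using weight_sandwich_cancel[OF q p, of "X ** Wp ** B ** Wq ** X" X]
      by (simp add: matrix_mul_assoc)
    then show ?thesis
      unfolding moore_penrose_def imult_def iadj_self_eq_iff_symmetric(1)[OF p]
        iadj_self_eq_iff_symmetric(2)[OF q]
      by (simp add: matrix_mul_assoc)
  qed
  have conj_pinv: "Wq ** (Wq ** pinv B ** Wp) ** Wp = pinv B"
    by (simp add: matrix_mul_assoc W)
  show ?thesis
    unfolding impinv_def penrose_iff
  proof (rule the_equality)
    show "moore_penrose B (Wq ** (Wq ** pinv B ** Wp) ** Wp)"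
      by (simp add: conj_pinv moore_penrose_pinv)
  next
    fix X
    assume "moore_penrose B (Wq ** X ** Wp)"
    then have "Wq ** X ** Wp = Wq ** (Wq ** pinv B ** Wp) ** Wp"
      unfolding conj_pinv by (rule pinv_eqI[symmetric])
    then show "X = Wq ** pinv B ** Wp"
      by (simp add: weight_sandwich_cancel[OF q p])
  qed
qed

lemma pinv_weight_intertwining:
  assumes M: "weight M" and N: "weight N" and MA: "M ** A = A ** N"
  shows "N ** pinv A ** M = pinv A"
proof -
  have "M ** A ** N = A"
    using MA N by (simp add: weight_simps)
  then show ?thesis
    using pinv_orthogonal_mult[OF weight_orthogonal_matrix[OF M] weight_orthogonal_matrix[OF N], of A]
    by (simp add: weight_simps M N)
qed

lemma impinv_eq_pinv_intertwining:
  assumes "weight M" "weight N" "M ** A = A ** N"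
  shows "impinv M N A = pinv A"
  using assms by (simp add: impinv_eq_pinv pinv_weight_intertwining)

lemma impinv_gram_intertwining:
  assumes M: "weight M" and N: "weight N" and "M ** A = A ** N"
  shows "impinv N N (imult M (iadj M N A) A) = pinv A ** transpose (pinv A) ** N"
proof -
  note W = weight_simps[OF M] weight_simps[OF N]
  have gram: "imult M (iadj M N A) A = N ** (transpose A ** A)"
    by (simp add: imult_def iadj_def W matrix_mul_assoc)
  have "impinv N N (imult M (iadj M N A) A) = N ** (pinv A ** transpose (pinv A) ** N) ** N"
    unfolding gram impinv_eq_pinv[OF N N] pinv_orthogonal_mult_left[OF weight_orthogonal_matrix[OF N]]
      pinv_gram W(4) ..
  also have "\<dots> = N ** pinv A ** transpose (pinv A)"
    by (simp add: W matrix_mul_assoc)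
  also have "\<dots> = pinv A ** transpose (pinv A) ** N"
  proof -
    have NP: "N ** pinv A = pinv A ** M"
      by (metis pinv_weight_intertwining[OF assms] W(3))
    then have "M ** transpose (pinv A) = transpose (pinv A) ** N"
      by (metis matrix_transpose_mul W(1) W(4))
    with NP show ?thesis
      by (metis matrix_mul_assoc)
  qed
  finally show ?thesis .
qed

theorem lemma3p12:
  fixes M :: "real^'m^'m" and N :: "real^'n^'n" and A :: "real^'n^'m"
    and K :: "(real^'n) set"
  assumes "weight M" and "weight N"
    and "M ** A = A ** N"
    and "is_cone K" and "closed K"
    and "iimage N (imult N (iadj N M (impinv M N A)) (mat 1)) (idual N K)
           \<subseteq> iimage N (imult N A (mat 1)) K"
  shows "iimage N (impinv N N (imult M (iadj M N A) A)) (idual N K)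
           \<subseteq> msum K (inull N (imult N A (mat 1)))"
proof
  note W = weight_simps[OF assms(1)] weight_simps[OF assms(2)]
  define P where "P = pinv A"
  have P_adj: "M ** transpose P ** N = transpose P"
    using arg_cong[OF pinv_weight_intertwining[OF assms(1-3)], of transpose]
    by (simp add: P_def matrix_transpose_mul W matrix_mul_assoc)
  have A_map: "iapply N (imult N A (mat 1)) x = A *v x" for x
    by (simp add: iapply_def imult_def matrix_vector_mul_assoc W)
  have hyp_map: "iapply N (imult N (iadj N M (impinv M N A)) (mat 1)) y = transpose P *v y" for y
    using P_adj
    by (simp add: iapply_def imult_def iadj_def impinv_eq_pinv_intertwining[OF assms(1-3)]
        matrix_vector_mul_assoc W P_def)
  have gram_map: "iapply N (impinv N N (imult M (iadj M N A) A)) y = P *v (transpose P *v y)" for y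
    by (simp add: iapply_def impinv_gram_intertwining[OF assms(1-3)] matrix_vector_mul_assoc W P_def
        del: transpose_matrix_vector)
  fix z
  assume "z \<in> iimage N (impinv N N (imult M (iadj M N A) A)) (idual N K)"
  then obtain y where "y \<in> idual N K" and z: "z = P *v (transpose P *v y)"
    unfolding iimage_def gram_map by blast
  then obtain k where k: "k \<in> K" and Pty: "transpose P *v y = A *v k"
    using assms(6) unfolding iimage_def hyp_map A_map by blast
  have "z = P *v (A *v k)"
    using z Pty by simp
  then have "A *v (z - k) = 0"
    unfolding P_def
    by (simp add: matrix_vector_mult_diff_distrib matrix_vector_mul_assoc matrix_mul_assoc
        moore_penrose_assoc_rules(1)[OF moore_penrose_pinv])
  then have "z - k \<in> inull N (imult N A (mat 1))"
    by (simp add: inull_def A_map)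
  then show "z \<in> msum K (inull N (imult N A (mat 1)))"
    unfolding msum_def using k by force
qed

end
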